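(* Let $G$ be a finite group and $H \leqslant G$ a nilpotent subgroup. If $|HP|$ divides $|G|$ for every Sylow subgroup $P$ of $G$ (for every prime), then $H$ is subnormal in $G$.
   Context: $HP$ denotes the product set $\{hx : h \in H, x \in P\}$. $H$ is subnormal in $G$ if there is a finite chain $H = H_0 \lhd H_1 \lhd \dots \lhd H_r = G$. *)

theory Defs
  imports "HOL-Algebra.Algebra"
begin

definition commutator_subgroup :: "('a, 'b) monoid_scheme \<Rightarrow> 'a set \<Rightarrow> 'a set \<Rightarrow> 'a set" where
  "commutator_subgroup G A B =
     generate G {a \<otimes>\<^bsub>G\<^esub> b \<otimes>\<^bsub>G\<^esub> inv\<^bsub>G\<^esub> a \<otimes>\<^bsub>G\<^esub> inv\<^bsub>G\<^esub> b | a b. a \<in> A \<and> b \<in> B}"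

fun lower_central :: "('a, 'b) monoid_scheme \<Rightarrow> 'a set \<Rightarrow> nat \<Rightarrow> 'a set" where
  "lower_central G H 0 = H"
| "lower_central G H (Suc n) = commutator_subgroup G (lower_central G H n) H"

definition nilpotent_subgroup :: "'a set \<Rightarrow> ('a, 'b) monoid_scheme \<Rightarrow> bool" where
  "nilpotent_subgroup H G \<longleftrightarrow> subgroup H G \<and> (\<exists>n. lower_central G H n = {\<one>\<^bsub>G\<^esub>})"

definition sylow_subgroup :: "nat \<Rightarrow> 'a set \<Rightarrow> ('a, 'b) monoid_scheme \<Rightarrow> bool" where
  "sylow_subgroup p P G \<longleftrightarrow> Factorial_Ring.prime p \<and> subgroup P G \<and>
     card P = p ^ Factorial_Ring.multiplicity p (order G)"

definition subnormal :: "'a set \<Rightarrow> ('a, 'b) monoid_scheme \<Rightarrow> bool" where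
  "subnormal H G \<longleftrightarrow> (\<exists>(r::nat) K. K 0 = H \<and> K r = carrier G \<and>
     (\<forall>i\<le>r. subgroup (K i) G) \<and>
     (\<forall>i<r. normal (K i) (G\<lparr>carrier := K (Suc i)\<rparr>)))"

end

theory Submission
  imports Defs
begin

text \<open>
  For a prime p let O_p be the intersection of the Sylow p-subgroups of G. Given a Sylow
  p-subgroup P, the identity |HP| |H \<inter> P| = |H| |P| together with |HP| dividing |G| shows that
  no p-subgroup of H properly contains H \<inter> P. Since H is nilpotent, H \<inter> P is subnormal in H,
  and climbing a subnormal series from H \<inter> P to H shows that H \<inter> P contains every p-element
  of H. Hence the p-elements of H lie in O_p for every p.

  Cores for distinct primes commute, so every h \<in> H is the product of an element of
  H \<inter> O_q and an element of H centralising O_q. This allows O_q to be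
  adjoined to \<langle>H, O_p : p \<in> \<pi>\<rangle> along a subnormal series from
  H \<inter> O_q to the q-group O_q, one prime at a time. Every element of H is a
  product of its prime-power parts, so the last group obtained is generated by the cores alone
  and is therefore normal in G.
\<close>

locale finite_group = group +
  assumes finite_carrier: "finite (carrier G)"

section \<open>Subnormal subgroups\<close>

context group
begin

lemma inv_mult_cancel_left [simp]:
  "x \<in> carrier G \<Longrightarrow> y \<in> carrier G \<Longrightarrow> inv x \<otimes> (x \<otimes> y) = y"
  by (simp add: m_assoc[symmetric])

lemma mult_inv_cancel_left [simp]:
  "x \<in> carrier G \<Longrightarrow> y \<in> carrier G \<Longrightarrow> x \<otimes> (inv x \<otimes> y) = y"
  by (simp add: m_assoc[symmetric])

inductive subnormal_in :: "'a set \<Rightarrow> 'a set \<Rightarrow> bool" where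
  refl: "subgroup A G \<Longrightarrow> subnormal_in A A"
| normal_step: "subnormal_in A B \<Longrightarrow> subgroup C G \<Longrightarrow> normal B (G\<lparr>carrier := C\<rparr>) \<Longrightarrow>
    subnormal_in A C"

lemma normal_restrict_subset: "normal A (G\<lparr>carrier := B\<rparr>) \<Longrightarrow> A \<subseteq> B"
  using normal_imp_subgroup subgroup.subset by fastforce

lemma normal_restrictI:
  assumes "subgroup A G" "subgroup B G" "A \<subseteq> B"
    and "\<And>g a. g \<in> B \<Longrightarrow> a \<in> A \<Longrightarrow> g \<otimes> a \<otimes> inv g \<in> A"
  shows "normal A (G\<lparr>carrier := B\<rparr>)"
proof -
  interpret B: group "G\<lparr>carrier := B\<rparr>" using subgroup_imp_group assms(2) .
  show ?thesis
    unfolding B.normal_inv_iff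
    using subgroup_incl[OF assms(1-3)] assms(4) m_inv_consistent[OF assms(2)] by auto
qed

lemma normal_restrictD:
  assumes "normal A (G\<lparr>carrier := B\<rparr>)" "subgroup B G" "g \<in> B" "a \<in> A"
  shows "g \<otimes> a \<otimes> inv g \<in> A"
proof -
  interpret B: group "G\<lparr>carrier := B\<rparr>" using subgroup_imp_group assms(2) .
  show ?thesis
    using assms(1) B.normal_inv_iff assms(3,4) m_inv_consistent[OF assms(2,3)] by auto
qed

lemma subnormal_in_subgroups:
  assumes "subnormal_in A B" shows "subgroup A G" and "subgroup B G"
  using assms by (induction rule: subnormal_in.induct) auto

lemma subnormal_in_subset: "subnormal_in A B \<Longrightarrow> A \<subseteq> B"
  by (induction rule: subnormal_in.induct) (auto dest: normal_restrict_subset)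

lemma subnormal_in_trans:
  assumes "subnormal_in A B" "subnormal_in B C" shows "subnormal_in A C"
  using assms(2,1) by (induction rule: subnormal_in.induct) (auto intro: subnormal_in.normal_step)

lemma subnormal_in_normal_prepend:
  assumes "subgroup A G" "normal A (G\<lparr>carrier := B\<rparr>)" "subnormal_in B C"
  shows "subnormal_in A C"
  using subnormal_in.normal_step[OF subnormal_in.refl[OF assms(1)] subnormal_in_subgroups(1) assms(2)]
    subnormal_in_trans assms(3) by blast

lemma subnormal_if_subnormal_in_carrier:
  assumes "subnormal_in H (carrier G)" shows "subnormal H G"
proof -
  have "\<exists>r K. K 0 = A \<and> K r = B \<and> (\<forall>i\<le>r. subgroup (K i) G) \<and>
      (\<forall>i<r. normal (K i) (G\<lparr>carrier := K (Suc i)\<rparr>))" if "subnormal_in A B" for A B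
    using that
  proof (induction rule: subnormal_in.induct)
    case (refl A) then show ?case by (intro exI[of _ 0]) auto
  next
    case (normal_step A B C)
    then obtain r K where K: "K 0 = A" "K r = B" "\<forall>i\<le>r. subgroup (K i) G"
        "\<forall>i<r. normal (K i) (G\<lparr>carrier := K (Suc i)\<rparr>)" by blast
    define K' where "K' = K(Suc r := C)"
    have "K' 0 = A" "K' (Suc r) = C" using K by (simp_all add: K'_def)
    moreover have "subgroup (K' i) G" if "i \<le> Suc r" for i
      using that K normal_step.hyps(2) by (cases "i = Suc r") (auto simp: K'_def)
    moreover have "normal (K' i) (G\<lparr>carrier := K' (Suc i)\<rparr>)" if "i < Suc r" for i
      using that K normal_step.hyps(3) by (cases "i = r") (auto simp: K'_def)
    ultimately show ?case by blast
  qed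
  then show ?thesis using assms unfolding subnormal_def by blast
qed

definition conj_stabilizer :: "'a set \<Rightarrow> 'a set" where
  "conj_stabilizer K = {g \<in> carrier G. \<forall>k\<in>K. g \<otimes> k \<otimes> inv g \<in> K}"

lemma conj_stabilizer_subgroup:
  assumes fin: "finite K" and K: "K \<subseteq> carrier G"
  shows "subgroup (conj_stabilizer K) G"
proof (rule subgroupI)
  show "conj_stabilizer K \<subseteq> carrier G" by (auto simp: conj_stabilizer_def)
  have "\<one> \<in> conj_stabilizer K" using K by (auto simp: conj_stabilizer_def)
  then show "conj_stabilizer K \<noteq> {}" by blast
next
  fix g assume "g \<in> conj_stabilizer K"
  then have g: "g \<in> carrier G" and into: "(\<lambda>k. g \<otimes> k \<otimes> inv g) ` K \<subseteq> K"
    by (auto simp: conj_stabilizer_def)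
  have "inj_on (\<lambda>k. g \<otimes> k \<otimes> inv g) K"
    using K g by (intro inj_onI) (metis subsetD inv_closed m_closed r_cancel l_cancel)
  then have onto: "(\<lambda>k. g \<otimes> k \<otimes> inv g) ` K = K" using endo_inj_surj fin into by blast
  have "inv g \<otimes> k \<otimes> inv (inv g) \<in> K" if "k \<in> K" for k
  proof -
    have "k \<in> (\<lambda>k. g \<otimes> k \<otimes> inv g) ` K" using onto that by simp
    then obtain k' where "k' \<in> K" "k = g \<otimes> k' \<otimes> inv g" by blast
    then show ?thesis using K g by (auto simp: m_assoc)
  qed
  then show "inv g \<in> conj_stabilizer K" using g by (simp add: conj_stabilizer_def)
next
  fix g h assume g: "g \<in> conj_stabilizer K" and h: "h \<in> conj_stabilizer K"
  then have gc: "g \<in> carrier G" and hc: "h \<in> carrier G" by (auto simp: conj_stabilizer_def)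
  have "g \<otimes> h \<otimes> k \<otimes> inv (g \<otimes> h) = g \<otimes> (h \<otimes> k \<otimes> inv h) \<otimes> inv g" if "k \<in> K" for k
    using gc hc K that by (simp add: subsetD m_assoc inv_mult_group)
  then show "g \<otimes> h \<in> conj_stabilizer K" using g h gc hc by (simp add: conj_stabilizer_def)
qed

lemma generate_conj_closed:
  assumes L: "subgroup L G" and S: "S \<subseteq> carrier G" and g: "g \<in> carrier G"
    and gen: "\<And>x. x \<in> S \<Longrightarrow> g \<otimes> x \<otimes> inv g \<in> L" and z: "z \<in> generate G S"
  shows "g \<otimes> z \<otimes> inv g \<in> L"
  using z
proof (induction z rule: generate.induct)
  case one then show ?case using g subgroup.one_closed[OF L] by simp
next
  case (incl h) then show ?case using gen by blast
next
  case (inv h)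
  have "g \<otimes> inv h \<otimes> inv g = inv (g \<otimes> h \<otimes> inv g)"
    using g inv S by (auto simp: inv_mult_group m_assoc)
  then show ?case using gen[OF inv] subgroup.m_inv_closed[OF L] by simp
next
  case (eng h1 h2)
  have "h1 \<in> carrier G" "h2 \<in> carrier G" using eng generate_in_carrier[OF S] by auto
  then have "g \<otimes> (h1 \<otimes> h2) \<otimes> inv g = (g \<otimes> h1 \<otimes> inv g) \<otimes> (g \<otimes> h2 \<otimes> inv g)"
    using g by (simp add: m_assoc)
  then show ?case using eng subgroup.m_closed[OF L] by simp
qed

lemma normal_generate_restrictI:
  assumes fin: "finite (generate G S)" and S: "S \<subseteq> T" and T: "T \<subseteq> carrier G"
    and conj: "\<And>g x. g \<in> T \<Longrightarrow> x \<in> S \<Longrightarrow> g \<otimes> x \<otimes> inv g \<in> generate G S"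
  shows "normal (generate G S) (G\<lparr>carrier := generate G T\<rparr>)"
proof -
  have Sc: "S \<subseteq> carrier G" using S T by blast
  have L: "subgroup (generate G S) G" using generate_is_subgroup[OF Sc] .
  have "T \<subseteq> conj_stabilizer (generate G S)"
    using generate_conj_closed[OF L Sc] conj T by (auto simp: conj_stabilizer_def)
  then have "generate G T \<subseteq> conj_stabilizer (generate G S)"
    using generate_subgroup_incl conj_stabilizer_subgroup[OF fin generate_incl[OF Sc]] by blast
  then show ?thesis
    using normal_restrictI[OF L generate_is_subgroup[OF T] mono_generate[OF S]]
    unfolding conj_stabilizer_def by blast
qed

lemma lower_central_subset:
  assumes "subgroup H G" shows "lower_central G H i \<subseteq> H"
proof (induction i)
  case (Suc i)
  have "{a \<otimes> b \<otimes> inv a \<otimes> inv b | a b. a \<in> lower_central G H i \<and> b \<in> H} \<subseteq> H"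
    using Suc assms by (auto intro!: subgroup.m_closed subgroup.m_inv_closed)
  then show ?case
    using generate_subgroup_incl[OF _ assms]
    unfolding commutator_subgroup_def lower_central.simps by blast
qed simp

text \<open>If K is a proper subgroup of the nilpotent group H, take the last term of the lower central
  series of H not contained in K: its commutators with H lie in K, so it normalises K.\<close>

lemma nilpotent_normalizers_grow:
  assumes nil: "nilpotent_subgroup H G" and K: "subgroup K G" "K \<subseteq> H" "K \<noteq> H"
  shows "\<exists>y\<in>H. y \<notin> K \<and> (\<forall>k\<in>K. y \<otimes> k \<otimes> inv y \<in> K)"
proof -
  have H: "subgroup H G" using nil unfolding nilpotent_subgroup_def by blast
  obtain n where "lower_central G H n = {\<one>}" using nil unfolding nilpotent_subgroup_def by blast
  then have ex: "\<exists>j. lower_central G H j \<subseteq> K"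
    using subgroup.one_closed[OF K(1)] by (intro exI[of _ n]) auto
  define j where "j = (LEAST j. lower_central G H j \<subseteq> K)"
  have j: "lower_central G H j \<subseteq> K" unfolding j_def by (rule LeastI_ex[OF ex])
  then obtain i where i: "j = Suc i" using K by (cases j) auto
  then have "\<not> lower_central G H i \<subseteq> K"
    using not_less_Least[of i "\<lambda>j. lower_central G H j \<subseteq> K"] unfolding j_def by auto
  then obtain y where y: "y \<in> lower_central G H i" "y \<notin> K" by blast
  have yH: "y \<in> H" using y lower_central_subset[OF H] by blast
  have "y \<otimes> k \<otimes> inv y \<in> K" if k: "k \<in> K" for k
  proof -
    have kH: "k \<in> H" using k K by blast
    have yc: "y \<in> carrier G" and kc: "k \<in> carrier G" using yH kH H subgroup.subset by auto
    have "y \<otimes> k \<otimes> inv y \<otimes> inv k \<in> lower_central G H j"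
      using y(1) kH unfolding i lower_central.simps commutator_subgroup_def
      by (intro generate.incl) blast
    then have "y \<otimes> k \<otimes> inv y \<otimes> inv k \<otimes> k \<in> K" using j k subgroup.m_closed[OF K(1)] by blast
    then show ?thesis using yc kc by (simp add: m_assoc)
  qed
  then show ?thesis using yH y by blast
qed

end

context finite_group
begin

lemma finite_subset_carrier: "A \<subseteq> carrier G \<Longrightarrow> finite A"
  using finite_carrier finite_subset by blast

lemma finite_subgroup: "subgroup A G \<Longrightarrow> finite A"
  using finite_subset_carrier subgroup.subset by blast

lemma subnormal_in_if_normalizers_grow:
  assumes A: "subgroup A G" and B: "subgroup B G" and AB: "A \<subseteq> B"
    and grow: "\<And>K. subgroup K G \<Longrightarrow> A \<subseteq> K \<Longrightarrow> K \<subseteq> B \<Longrightarrow> K \<noteq> B \<Longrightarrow>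
       \<exists>y\<in>B. y \<notin> K \<and> (\<forall>k\<in>K. y \<otimes> k \<otimes> inv y \<in> K)"
  shows "subnormal_in A B"
proof -
  have "subnormal_in K B" if "subgroup K G" "A \<subseteq> K" "K \<subseteq> B" for K
    using that
  proof (induction "card B - card K" arbitrary: K rule: less_induct)
    case (less K)
    show ?case
    proof (cases "K = B")
      case True then show ?thesis using subnormal_in.refl B by simp
    next
      case False
      obtain y where y: "y \<in> B" "y \<notin> K" "\<forall>k\<in>K. y \<otimes> k \<otimes> inv y \<in> K"
        using grow[OF less(2-4) False] by blast
      have Kc: "K \<subseteq> carrier G" using less(2) subgroup.subset by blast
      define N where "N = conj_stabilizer K \<inter> B"
      have N: "subgroup N G" unfolding N_def
        using subgroups_Inter_pair[OF conj_stabilizer_subgroup[OF finite_subgroup[OF less(2)] Kc] B] .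
      have KN: "K \<subseteq> N" using less(2,4) Kc
        by (auto simp: N_def conj_stabilizer_def intro!: subgroup.m_closed subgroup.m_inv_closed)
      have yN: "y \<in> N" using y B subgroup.subset unfolding N_def conj_stabilizer_def by blast
      have nor: "normal K (G\<lparr>carrier := N\<rparr>)"
        by (rule normal_restrictI[OF less(2) N KN]) (auto simp: N_def conj_stabilizer_def)
      have "card K < card N"
        using KN yN y(2) finite_subgroup[OF N] by (metis psubsetI psubset_card_mono)
      moreover have "card N \<le> card B" using finite_subgroup[OF B] by (auto simp: N_def intro!: card_mono)
      ultimately have "card B - card N < card B - card K" by linarith
      then have "subnormal_in N B" using less.hyps N less(3) KN by (auto simp: N_def)
      then show ?thesis by (rule subnormal_in_normal_prepend[OF less(2) nor])
    qed
  qed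
  then show ?thesis using A AB by blast
qed

lemma subnormal_in_nilpotent:
  assumes "nilpotent_subgroup H G" "subgroup S G" "S \<subseteq> H"
  shows "subnormal_in S H"
  using assms nilpotent_normalizers_grow unfolding nilpotent_subgroup_def
  by (intro subnormal_in_if_normalizers_grow) blast+

end

section \<open>p-elements and p-subgroups\<close>

context group
begin

definition p_element :: "nat \<Rightarrow> 'a \<Rightarrow> bool" where
  "p_element p x \<longleftrightarrow> (\<exists>k. x [^] (p ^ k) = \<one>)"

definition p_subgroup :: "nat \<Rightarrow> 'a set \<Rightarrow> bool" where
  "p_subgroup p P \<longleftrightarrow> subgroup P G \<and> (\<exists>n. card P = p ^ n)"

definition maximal_p_subgroup_in :: "nat \<Rightarrow> 'a set \<Rightarrow> 'a set \<Rightarrow> bool" where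
  "maximal_p_subgroup_in p S K \<longleftrightarrow> p_subgroup p S \<and> S \<subseteq> K \<and>
     (\<forall>T. p_subgroup p T \<longrightarrow> S \<subseteq> T \<longrightarrow> T \<subseteq> K \<longrightarrow> T = S)"

lemma card_subgroup_dvd:
  assumes "subgroup A G" "subgroup B G" "A \<subseteq> B"
  shows "card A dvd card B"
proof -
  interpret B: group "G\<lparr>carrier := B\<rparr>" using subgroup_imp_group assms(2) .
  have "card (rcosets\<^bsub>G\<lparr>carrier := B\<rparr>\<^esub> A) * card A = card B"
    using B.lagrange subgroup_incl[OF assms] by (simp add: order_def)
  then show ?thesis by (metis dvd_triv_right)
qed

lemma pow_card_subgroup:
  assumes A: "subgroup A G" and x: "x \<in> A"
  shows "x [^] card A = \<one>"
proof -
  have xc: "x \<in> carrier G" using A x subgroup.subset by blast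
  have "generate G {x} \<subseteq> A" using generate_subgroup_incl A x by auto
  then have "ord x dvd card A"
    using card_subgroup_dvd[OF generate_is_subgroup A] generate_pow_card[OF xc] xc by auto
  then show ?thesis using pow_eq_id[OF xc] by simp
qed

lemma conj_nat_pow:
  assumes "g \<in> carrier G" "s \<in> carrier G"
  shows "(g \<otimes> s \<otimes> inv g) [^] (n::nat) = g \<otimes> s [^] n \<otimes> inv g"
  using assms by (induction n) (auto simp: m_assoc)

lemma p_element_conj:
  "p_element p s \<Longrightarrow> g \<in> carrier G \<Longrightarrow> s \<in> carrier G \<Longrightarrow> p_element p (g \<otimes> s \<otimes> inv g)"
  unfolding p_element_def by (metis conj_nat_pow r_one r_inv)

lemma p_subgroup_p_element: "p_subgroup p P \<Longrightarrow> x \<in> P \<Longrightarrow> p_element p x"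
  unfolding p_subgroup_def p_element_def using pow_card_subgroup by metis

lemma p_subgroup_subgroup:
  assumes "Factorial_Ring.prime p" "p_subgroup p Q" "subgroup A G" "A \<subseteq> Q"
  shows "p_subgroup p A"
  using assms card_subgroup_dvd[OF assms(3) _ assms(4)] divides_primepow_nat
  unfolding p_subgroup_def by metis

lemma p_element_q_element_eq_one:
  assumes x: "x \<in> carrier G" and p: "Factorial_Ring.prime p" and q: "Factorial_Ring.prime q"
    and "p \<noteq> q" "p_element p x" "p_element q x"
  shows "x = \<one>"
proof -
  obtain b c where "x [^] (p ^ b) = \<one>" "x [^] (q ^ c) = \<one>"
    using assms(5,6) unfolding p_element_def by blast
  then have "ord x dvd p ^ b" "ord x dvd q ^ c" using pow_eq_id[OF x] by auto
  moreover have "coprime (p ^ b) (q ^ c)" using primes_coprime[OF p q \<open>p \<noteq> q\<close>] by simp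
  ultimately have "ord x = 1" using coprime_common_divisor_nat by blast
  then show ?thesis using ord_eq_1[OF x] by simp
qed

lemma maximal_p_subgroup_in_mono:
  "maximal_p_subgroup_in p S K \<Longrightarrow> S \<subseteq> K' \<Longrightarrow> K' \<subseteq> K \<Longrightarrow> maximal_p_subgroup_in p S K'"
  unfolding maximal_p_subgroup_in_def by blast

lemma subgroup_set_mult_normalizing:
  assumes A: "subgroup A G" and B: "subgroup B G"
    and nor: "\<And>b a. b \<in> B \<Longrightarrow> a \<in> A \<Longrightarrow> b \<otimes> a \<otimes> inv b \<in> A"
  shows "subgroup (A <#> B) G"
proof (rule subgroupI)
  have Ac: "A \<subseteq> carrier G" and Bc: "B \<subseteq> carrier G" using A B subgroup.subset by auto
  show "A <#> B \<subseteq> carrier G" using Ac Bc unfolding set_mult_def by auto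
  have "\<one> \<otimes> \<one> \<in> A <#> B" using subgroup.one_closed[OF A] subgroup.one_closed[OF B]
    unfolding set_mult_def by blast
  then show "A <#> B \<noteq> {}" by blast
next
  have Ac: "A \<subseteq> carrier G" and Bc: "B \<subseteq> carrier G" using A B subgroup.subset by auto
  fix x assume "x \<in> A <#> B"
  then obtain a b where ab: "a \<in> A" "b \<in> B" "x = a \<otimes> b" unfolding set_mult_def by auto
  have "inv x = (inv b \<otimes> inv a \<otimes> inv (inv b)) \<otimes> inv b"
    using ab Ac Bc by (auto simp: inv_mult_group m_assoc subsetD)
  moreover have "inv b \<otimes> inv a \<otimes> inv (inv b) \<in> A"
    using nor ab A B by (simp add: subgroup.m_inv_closed)
  moreover have "inv b \<in> B" using B ab by (simp add: subgroup.m_inv_closed)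
  ultimately show "inv x \<in> A <#> B" unfolding set_mult_def by blast
next
  have Ac: "A \<subseteq> carrier G" and Bc: "B \<subseteq> carrier G" using A B subgroup.subset by auto
  fix x y assume "x \<in> A <#> B" "y \<in> A <#> B"
  then obtain a b a' b' where ab: "a \<in> A" "b \<in> B" "x = a \<otimes> b" "a' \<in> A" "b' \<in> B" "y = a' \<otimes> b'"
    unfolding set_mult_def by auto
  have "x \<otimes> y = (a \<otimes> (b \<otimes> a' \<otimes> inv b)) \<otimes> (b \<otimes> b')"
    using ab Ac Bc by (auto simp: m_assoc subsetD)
  moreover have "a \<otimes> (b \<otimes> a' \<otimes> inv b) \<in> A" using nor ab A by (simp add: subgroup.m_closed)
  moreover have "b \<otimes> b' \<in> B" using ab B by (simp add: subgroup.m_closed)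
  ultimately show "x \<otimes> y \<in> A <#> B" unfolding set_mult_def by blast
qed

lemma card_mult_fibre:
  assumes A: "subgroup A G" and B: "subgroup B G" and a0: "a0 \<in> A" and b0: "b0 \<in> B"
  shows "card {p \<in> A \<times> B. fst p \<otimes> snd p = a0 \<otimes> b0} = card (A \<inter> B)"
proof -
  define F where "F = {p \<in> A \<times> B. fst p \<otimes> snd p = a0 \<otimes> b0}"
  have Ac: "A \<subseteq> carrier G" and Bc: "B \<subseteq> carrier G" using A B subgroup.subset by auto
  have c0: "a0 \<in> carrier G" "b0 \<in> carrier G" using a0 b0 Ac Bc by auto
  have "bij_betw (\<lambda>t. (a0 \<otimes> t, inv t \<otimes> b0)) (A \<inter> B) F"
  proof (rule bij_betw_byWitness[where f'="\<lambda>p. inv a0 \<otimes> fst p"])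
    show "\<forall>t\<in>A \<inter> B. inv a0 \<otimes> fst (a0 \<otimes> t, inv t \<otimes> b0) = t" using c0 Ac by auto
    show "(\<lambda>t. (a0 \<otimes> t, inv t \<otimes> b0)) ` (A \<inter> B) \<subseteq> F"
      using a0 b0 A B c0 Ac unfolding F_def
      by (auto simp: subgroup.m_closed subgroup.m_inv_closed m_assoc subsetD)
    have "inv a0 \<otimes> a \<in> A \<inter> B \<and> (a0 \<otimes> (inv a0 \<otimes> a), inv (inv a0 \<otimes> a) \<otimes> b0) = (a, b)"
      if ab: "a \<in> A" "b \<in> B" "a \<otimes> b = a0 \<otimes> b0" for a b
    proof -
      have ac: "a \<in> carrier G" and bc: "b \<in> carrier G" using ab Ac Bc by auto
      have "inv a0 \<otimes> a = inv a0 \<otimes> (a \<otimes> b) \<otimes> inv b" using ac bc c0 by (simp add: m_assoc)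
      also have "\<dots> = b0 \<otimes> inv b" using ab(3) bc c0 by (simp add: m_assoc)
      finally have "inv a0 \<otimes> a \<in> B" using ab b0 B by (simp add: subgroup.m_closed subgroup.m_inv_closed)
      moreover have "inv (inv a0 \<otimes> a) \<otimes> b0 = inv a \<otimes> (a \<otimes> b)"
        using ab(3) ac c0 by (simp add: inv_mult_group m_assoc)
      then have "inv (inv a0 \<otimes> a) \<otimes> b0 = b" using ac bc by simp
      ultimately show ?thesis using ab a0 A ac bc c0 by (simp add: subgroup.m_closed subgroup.m_inv_closed)
    qed
    then show "\<forall>p\<in>F. (a0 \<otimes> (inv a0 \<otimes> fst p), inv (inv a0 \<otimes> fst p) \<otimes> b0) = p"
      and "(\<lambda>p. inv a0 \<otimes> fst p) ` F \<subseteq> A \<inter> B"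
      unfolding F_def by auto
  qed
  then show ?thesis unfolding F_def by (simp add: bij_betw_same_card)
qed

lemma card_set_mult_Int:
  assumes A: "subgroup A G" and B: "subgroup B G" and finA: "finite A" and finB: "finite B"
  shows "card (A <#> B) * card (A \<inter> B) = card A * card B"
proof -
  define F where "F = (\<lambda>z. {p \<in> A \<times> B. fst p \<otimes> snd p = z})"
  have U: "A \<times> B = (\<Union>z\<in>A <#> B. F z)" unfolding F_def set_mult_def by fastforce
  have "card (F z) = card (A \<inter> B)" if "z \<in> A <#> B" for z
    using that card_mult_fibre[OF A B] unfolding F_def set_mult_def by blast
  moreover have "finite (A <#> B)" using finA finB unfolding set_mult_def by auto
  then have "card (A \<times> B) = (\<Sum>z\<in>A <#> B. card (F z))"
    unfolding U by (rule card_UN_disjoint) (auto simp: F_def finA finB)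
  ultimately show ?thesis by (simp add: card_cartesian_product)
qed

lemma p_element_in_normalized_maximal_p_subgroup:
  assumes p: "Factorial_Ring.prime p" and max: "maximal_p_subgroup_in p S K"
    and K: "subgroup K G" and nor: "\<And>g s. g \<in> K \<Longrightarrow> s \<in> S \<Longrightarrow> g \<otimes> s \<otimes> inv g \<in> S"
    and y: "y \<in> K" "p_element p y"
  shows "y \<in> S"
proof -
  obtain b where S: "subgroup S G" "card S = p ^ b" "S \<subseteq> K"
    using max unfolding maximal_p_subgroup_in_def p_subgroup_def by blast
  obtain k where yk: "y [^] (p ^ k) = \<one>" using y(2) unfolding p_element_def by blast
  have yc: "y \<in> carrier G" using y K subgroup.subset by blast
  define Y where "Y = generate G {y}"
  have Y: "subgroup Y G" unfolding Y_def using generate_is_subgroup yc by auto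
  have YK: "Y \<subseteq> K" unfolding Y_def using generate_subgroup_incl K y by auto
  have "card Y dvd p ^ k" unfolding Y_def using generate_pow_card[OF yc] pow_eq_id[OF yc] yk by simp
  then obtain e where cY: "card Y = p ^ e" using divides_primepow_nat[OF p] by blast
  define T where "T = S <#> Y"
  have T: "subgroup T G" unfolding T_def
    by (rule subgroup_set_mult_normalizing[OF S(1) Y]) (use nor YK in blast)
  have TK: "T \<subseteq> K" unfolding T_def set_mult_def using S(3) YK subgroup.m_closed[OF K] by blast
  have ST: "S \<subseteq> T"
  proof
    fix s assume s: "s \<in> S"
    then have "s = s \<otimes> \<one>" using S subgroup.subset by (metis r_one subsetD)
    then show "s \<in> T" unfolding T_def set_mult_def using s subgroup.one_closed[OF Y] by blast
  qed
  have "finite S" "finite Y" using S(2) cY prime_gt_0_nat[OF p] by (auto intro!: card_ge_0_finite)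
  then have "card T * card (S \<inter> Y) = p ^ b * p ^ e"
    using card_set_mult_Int[OF S(1) Y] S(2) cY unfolding T_def by simp
  then have "card T dvd p ^ (b + e)" by (metis dvd_triv_left power_add)
  then have "p_subgroup p T" using T divides_primepow_nat[OF p] unfolding p_subgroup_def by blast
  then have "T = S" using max ST TK unfolding maximal_p_subgroup_in_def by blast
  moreover have "y \<in> T" unfolding T_def set_mult_def Y_def
    using subgroup.one_closed[OF S(1)] generate.incl[of y "{y}" G] yc by force
  ultimately show ?thesis by simp
qed

text \<open>Up a subnormal series from S to K each term normalises S, since conjugates of S are
  p-elements of the previous term; so every p-element of the term generates with S a p-subgroup,
  which by maximality is S.\<close>

lemma p_element_in_subnormal_maximal_p_subgroup:
  assumes p: "Factorial_Ring.prime p" and sn: "subnormal_in S K"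
    and max: "maximal_p_subgroup_in p S K" and y: "y \<in> K" "p_element p y"
  shows "y \<in> S"
proof -
  have "(\<forall>g\<in>B. \<forall>s\<in>A. g \<otimes> s \<otimes> inv g \<in> A) \<and> (\<forall>y\<in>B. p_element p y \<longrightarrow> y \<in> A)"
    if "subnormal_in A B" "maximal_p_subgroup_in p A K" "B \<subseteq> K" for A B
    using that
  proof (induction rule: subnormal_in.induct)
    case (refl A)
    then show ?case by (simp add: subgroup.m_closed subgroup.m_inv_closed)
  next
    case (normal_step A B C)
    have AB: "A \<subseteq> B" using subnormal_in_subset[OF normal_step.hyps(1)] .
    have BC: "B \<subseteq> C" using normal_restrict_subset[OF normal_step.hyps(3)] .
    have IH: "\<forall>y\<in>B. p_element p y \<longrightarrow> y \<in> A" using normal_step.IH normal_step.prems BC by blast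
    have conj: "g \<otimes> s \<otimes> inv g \<in> A" if "g \<in> C" "s \<in> A" for g s
    proof -
      have "g \<in> carrier G" "s \<in> carrier G"
        using that AB BC subgroup.subset[OF normal_step.hyps(2)] by auto
      moreover have "p_element p s"
        using that normal_step.prems(1) p_subgroup_p_element
        unfolding maximal_p_subgroup_in_def by blast
      ultimately have "p_element p (g \<otimes> s \<otimes> inv g)" by (intro p_element_conj)
      moreover have "g \<otimes> s \<otimes> inv g \<in> B"
        using normal_restrictD[OF normal_step.hyps(3,2)] that AB by blast
      ultimately show ?thesis using IH by blast
    qed
    have "maximal_p_subgroup_in p A C"
      using maximal_p_subgroup_in_mono[OF normal_step.prems(1)] AB BC normal_step.prems(2) by blast
    then have "y \<in> A" if "y \<in> C" "p_element p y" for y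
      using p_element_in_normalized_maximal_p_subgroup[OF p _ normal_step.hyps(2) conj that] by blast
    with conj show ?case by blast
  qed
  then show ?thesis using sn max y by blast
qed

end

section \<open>Normalisers in p-groups\<close>

lemma (in group_action) prime_dvd_card_orbit:
  assumes p: "Factorial_Ring.prime p" and ord: "order G = p ^ n"
    and x: "x \<in> E" and moved: "g \<in> carrier G" "\<phi> g x \<noteq> x"
  shows "p dvd card (orbit G \<phi> x)"
proof -
  have "card (orbit G \<phi> x) dvd p ^ n" using orbit_stabilizer_theorem[OF x] ord by (metis dvd_triv_left)
  then obtain i where i: "card (orbit G \<phi> x) = p ^ i" using divides_primepow_nat[OF p] by blast
  have "i \<noteq> 0"
  proof
    assume "i = 0"
    then obtain y where "orbit G \<phi> x = {y}" using i card_1_singletonE by auto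
    then have "orbit G \<phi> x = {x}" using orbit_refl[OF x] by auto
    then show False using moved unfolding orbit_def by blast
  qed
  then show ?thesis using i by simp
qed

text \<open>The non-fixed points split into orbits of size divisible by p.\<close>

lemma (in group_action) card_fixed_points_mod_prime:
  assumes fin: "finite E" and p: "Factorial_Ring.prime p" and ord: "order G = p ^ n"
  shows "card {x \<in> E. \<forall>g\<in>carrier G. \<phi> g x = x} mod p = card E mod p"
proof -
  define Fix where "Fix = {x \<in> E. \<forall>g\<in>carrier G. \<phi> g x = x}"
  define Orbs where "Orbs = {orbit G \<phi> x | x. x \<in> E - Fix}"
  have orbit_subset: "orbit G \<phi> x \<subseteq> E" if "x \<in> E" for x
    using that element_image unfolding orbit_def by blast
  have "orbit G \<phi> x \<subseteq> E - Fix" if x: "x \<in> E - Fix" for x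
  proof
    fix y assume y: "y \<in> orbit G \<phi> x"
    have "y \<notin> Fix"
    proof
      assume "y \<in> Fix"
      moreover have "x \<in> orbit G \<phi> y" using orbit_sym x y orbit_subset by blast
      ultimately show False using x unfolding Fix_def orbit_def by auto
    qed
    then show "y \<in> E - Fix" using y x orbit_subset by blast
  qed
  then have "E - Fix = \<Union>Orbs" unfolding Orbs_def using orbit_refl by blast
  moreover have "pairwise disjnt Orbs"
    using disjoint_union unfolding Orbs_def orbits_def pairwise_def disjnt_def by blast
  moreover have "finite Orb" if "Orb \<in> Orbs" for Orb
    using that orbit_subset fin finite_subset unfolding Orbs_def by blast
  ultimately have "card (E - Fix) = sum card Orbs" using card_Union_disjoint by metis
  also have "p dvd \<dots>"
    using prime_dvd_card_orbit[OF p ord] unfolding Orbs_def Fix_def by (intro dvd_sum) blast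
  finally obtain k where k: "card (E - Fix) = p * k" by blast
  have "Fix \<subseteq> E" unfolding Fix_def by blast
  then have "card E = card Fix + card (E - Fix)"
    using fin card_Diff_subset[of Fix E] card_mono[of E Fix] finite_subset by fastforce
  then show ?thesis using k unfolding Fix_def by simp
qed

context group
begin

lemma right_coset_mult_closed:
  assumes K: "subgroup K G" and Q: "subgroup Q G" and KQ: "K \<subseteq> Q"
    and k: "k \<in> K" and C: "C \<in> {K #> x | x. x \<in> Q}"
  shows "C #> k \<in> {K #> x | x. x \<in> Q}"
proof -
  obtain x where x: "x \<in> Q" "C = K #> x" using C by auto
  have "K \<subseteq> carrier G" "x \<in> carrier G" "k \<in> carrier G"
    using x k K Q subgroup.subset by auto
  then have "C #> k = K #> (x \<otimes> k)" using x by (simp add: coset_mult_assoc)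
  moreover have "x \<otimes> k \<in> Q" using x k KQ Q by (auto intro: subgroup.m_closed)
  ultimately show ?thesis by blast
qed

lemma right_coset_action:
  assumes K: "subgroup K G" and Q: "subgroup Q G" and KQ: "K \<subseteq> Q"
  defines "E \<equiv> {K #> x | x. x \<in> Q}"
  shows "group_action (G\<lparr>carrier := K\<rparr>) E (\<lambda>k. \<lambda>C\<in>E. C #> inv k)"
proof -
  have Kc: "K \<subseteq> carrier G" using K subgroup.subset by auto
  have Ec: "C \<subseteq> carrier G" if "C \<in> E" for C
    using that Kc Q subgroup.subset r_coset_subset_G unfolding E_def by blast
  note E_closed = right_coset_mult_closed[OF K Q KQ, folded E_def]
  have bij: "(\<lambda>C\<in>E. C #> inv k) \<in> Bij E" if k: "k \<in> K" for k
  proof -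
    have "bij_betw (\<lambda>C. C #> inv k) E E"
      by (rule bij_betw_byWitness[where f'="\<lambda>C. C #> k"])
        (use E_closed k K Ec Kc in \<open>auto simp: coset_mult_assoc subsetD subgroup.m_inv_closed\<close>)
    then show ?thesis unfolding Bij_def by (simp add: bij_betw_restrict_eq)
  qed
  show ?thesis
    unfolding group_action_def group_hom_def group_hom_axioms_def
  proof (intro conjI subgroup_imp_group[OF K] group_BijGroup homI)
    fix k assume "k \<in> carrier (G\<lparr>carrier := K\<rparr>)"
    then show "(\<lambda>C\<in>E. C #> inv k) \<in> carrier (BijGroup E)"
      using bij by (simp add: BijGroup_def)
  next
    fix k1 k2 assume "k1 \<in> carrier (G\<lparr>carrier := K\<rparr>)" "k2 \<in> carrier (G\<lparr>carrier := K\<rparr>)"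
    then have k: "k1 \<in> K" "k2 \<in> K" by auto
    have "(\<lambda>C\<in>E. C #> inv (k1 \<otimes> k2)) C = compose E (\<lambda>C\<in>E. C #> inv k1) (\<lambda>C\<in>E. C #> inv k2) C"
      for C
    proof (cases "C \<in> E")
      case True
      have "C #> inv (k1 \<otimes> k2) = C #> inv k2 #> inv k1"
        using True Ec k Kc by (simp add: coset_mult_assoc inv_mult_group subsetD)
      then show ?thesis
        using True E_closed[OF subgroup.m_inv_closed[OF K k(2)] True] by (simp add: compose_def)
    qed (simp add: compose_def)
    then have "(\<lambda>C\<in>E. C #> inv (k1 \<otimes> k2)) = compose E (\<lambda>C\<in>E. C #> inv k1) (\<lambda>C\<in>E. C #> inv k2)" ..
    then show "(\<lambda>C\<in>E. C #> inv (k1 \<otimes>\<^bsub>G\<lparr>carrier := K\<rparr>\<^esub> k2)) =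
        (\<lambda>C\<in>E. C #> inv k1) \<otimes>\<^bsub>BijGroup E\<^esub> (\<lambda>C\<in>E. C #> inv k2)"
      using bij k by (simp add: BijGroup_def)
  qed
qed

lemma normalizes_if_right_coset_fixed:
  assumes K: "subgroup K G" and x: "x \<in> carrier G"
    and fixed: "\<And>k. k \<in> K \<Longrightarrow> K #> x #> k = K #> x" and k: "k \<in> K"
  shows "x \<otimes> k \<otimes> inv x \<in> K"
proof -
  have kc: "k \<in> carrier G" using k K subgroup.subset by blast
  have "x \<otimes> k \<in> K #> x #> k" using subgroup.one_closed[OF K] x kc unfolding r_coset_def by force
  then obtain h where h: "h \<in> K" "x \<otimes> k = h \<otimes> x" using fixed[OF k] unfolding r_coset_def by auto
  moreover have "h \<in> carrier G" using h K subgroup.subset by blast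
  ultimately have "x \<otimes> k \<otimes> inv x = h" using x by (simp add: m_assoc)
  then show ?thesis using h by simp
qed

end

context finite_group
begin

lemma prime_dvd_card_right_cosets:
  assumes p: "Factorial_Ring.prime p" and Q: "p_subgroup p Q"
    and K: "subgroup K G" and KQ: "K \<subseteq> Q" and KnQ: "K \<noteq> Q"
  shows "p dvd card {K #> x | x. x \<in> Q}"
proof -
  obtain n where QG: "subgroup Q G" and cQ: "card Q = p ^ n" using Q unfolding p_subgroup_def by blast
  obtain m where cK: "card K = p ^ m" using p_subgroup_subgroup[OF p Q K KQ] unfolding p_subgroup_def by blast
  have "card K < card Q" using KQ KnQ finite_subgroup[OF QG] psubset_card_mono by blast
  then have mn: "m < n" using cK cQ power_less_imp_less_exp prime_gt_1_nat[OF p] by metis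
  interpret Q: group "G\<lparr>carrier := Q\<rparr>" using subgroup_imp_group QG .
  have "card (rcosets\<^bsub>G\<lparr>carrier := Q\<rparr>\<^esub> K) * card K = card Q"
    using Q.lagrange subgroup_incl[OF K QG KQ] by (simp add: order_def)
  moreover have "rcosets\<^bsub>G\<lparr>carrier := Q\<rparr>\<^esub> K = {K #> x | x. x \<in> Q}"
    unfolding RCOSETS_def r_coset_def by auto
  ultimately have "card {K #> x | x. x \<in> Q} * p ^ m = p ^ (n - m) * p ^ m"
    using cK cQ mn by (simp add: power_add[symmetric])
  then have "card {K #> x | x. x \<in> Q} = p ^ (n - m)" using prime_gt_0_nat[OF p] by simp
  then show ?thesis using mn by simp
qed

text \<open>K acts on its right cosets in Q; since p divides their number, the fixed coset K is not alone,
  and a fixed coset K x with x \<notin> K gives an element normalising K.\<close>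

lemma p_group_normalizers_grow:
  assumes p: "Factorial_Ring.prime p" and Q: "p_subgroup p Q"
    and K: "subgroup K G" and KQ: "K \<subseteq> Q" and KnQ: "K \<noteq> Q"
  shows "\<exists>y\<in>Q. y \<notin> K \<and> (\<forall>k\<in>K. y \<otimes> k \<otimes> inv y \<in> K)"
proof -
  have QG: "subgroup Q G" using Q unfolding p_subgroup_def by blast
  have Kc: "K \<subseteq> carrier G" and Qc: "Q \<subseteq> carrier G" using K QG subgroup.subset by auto
  define E where "E = {K #> x | x. x \<in> Q}"
  define \<phi> where "\<phi> = (\<lambda>k. \<lambda>C\<in>E. C #> inv k)"
  interpret A: group_action "G\<lparr>carrier := K\<rparr>" E \<phi>
    unfolding E_def \<phi>_def using right_coset_action[OF K QG KQ] .
  define Fix where "Fix = {C \<in> E. \<forall>k\<in>K. \<phi> k C = C}"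
  obtain m where "card K = p ^ m" using p_subgroup_subgroup[OF p Q K KQ] unfolding p_subgroup_def by blast
  then have ordK: "order (G\<lparr>carrier := K\<rparr>) = p ^ m" by (simp add: order_def)
  have "finite E" using finite_subgroup[OF QG] by (simp add: E_def)
  then have "card Fix mod p = card E mod p"
    using A.card_fixed_points_mod_prime[OF _ p ordK] by (simp add: Fix_def)
  then have p_dvd_Fix: "p dvd card Fix"
    using prime_dvd_card_right_cosets[OF p Q K KQ KnQ] unfolding E_def by (simp add: mod_eq_0_iff_dvd)
  have KE: "K \<in> E" using coset_mult_one[OF Kc] subgroup.one_closed[OF QG] unfolding E_def by force
  have "K \<in> Fix"
    using KE coset_join2[OF _ K] Kc K unfolding Fix_def \<phi>_def by (simp add: subgroup.m_inv_closed subsetD)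
  moreover have "Fix \<noteq> {K}" using p_dvd_Fix prime_gt_1_nat[OF p] by auto
  ultimately obtain C where C: "C \<in> Fix" "C \<noteq> K" by blast
  then obtain x where x: "x \<in> Q" "C = K #> x" unfolding Fix_def E_def by blast
  have xc: "x \<in> carrier G" using x Qc by auto
  have "x \<notin> K" using coset_join2[OF xc K] x C by auto
  moreover have "K #> x #> k = K #> x" if "k \<in> K" for k
  proof -
    have "\<phi> (inv k) C = C" using C that K unfolding Fix_def by (simp add: subgroup.m_inv_closed)
    then show ?thesis using C x that Kc unfolding Fix_def \<phi>_def by (simp add: subsetD)
  qed
  then have "\<forall>k\<in>K. x \<otimes> k \<otimes> inv x \<in> K" using normalizes_if_right_coset_fixed[OF K xc] by blast
  ultimately show ?thesis using x by blast
qed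

lemma subnormal_in_p_group:
  assumes "Factorial_Ring.prime p" "p_subgroup p Q" "subgroup A G" "A \<subseteq> Q"
  shows "subnormal_in A Q"
  using assms p_group_normalizers_grow unfolding p_subgroup_def
  by (intro subnormal_in_if_normalizers_grow) blast+

end

section \<open>Prime-power parts of elements\<close>

lemma prime_power_coprime_split:
  fixes n p :: nat
  assumes n: "n \<noteq> 0" and p: "Factorial_Ring.prime p"
  obtains k M u w where "n = p ^ k * M" "\<not> p dvd M" "M * u = p ^ k * w + 1" "p dvd n \<Longrightarrow> M < n"
proof -
  define k where "k = multiplicity p n"
  define M where "M = n div p ^ k"
  have nM: "n = p ^ k * M" unfolding M_def k_def by (simp add: multiplicity_dvd)
  have pM: "\<not> p dvd M" unfolding M_def k_def
    using multiplicity_decompose[of n p] n prime_gt_1_nat[OF p] by auto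
  have M0: "M \<noteq> 0" using nM n by auto
  have "coprime M (p ^ k)" using prime_imp_coprime[OF p pM] by (simp add: coprime_commute)
  then obtain u w where uw: "M * u = p ^ k * w + 1" using bezout_nat[OF M0] by (metis coprime_iff_gcd_eq_1)
  have "M < n" if "p dvd n"
  proof -
    have "k \<noteq> 0"
    proof
      assume "k = 0"
      then show False using that pM nM by simp
    qed
    then have "2 \<le> p ^ k" using prime_ge_2_nat[OF p] self_le_power[of p k] by linarith
    have "M < 2 * M" using M0 by simp
    also have "\<dots> \<le> p ^ k * M" using \<open>2 \<le> p ^ k\<close> by (rule mult_le_mono1)
    finally show ?thesis using nM by simp
  qed
  then show ?thesis using that nM pM uw by blast
qed

context finite_group
begin

lemma prime_part_decomposition:
  assumes x: "x \<in> carrier G" and p: "Factorial_Ring.prime p"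
  obtains a b where "a \<in> generate G {x}" "b \<in> generate G {x}" "x = a \<otimes> b" "x = b \<otimes> a"
    "p_element p a" "\<not> p dvd ord b" "ord b dvd ord x" "p dvd ord x \<Longrightarrow> ord b < ord x"
proof -
  have ord0: "ord x \<noteq> 0" using ord_ge_1[OF finite_carrier x] by simp
  obtain k M u w where n: "ord x = p ^ k * M" "\<not> p dvd M" "M * u = p ^ k * w + 1"
      "p dvd ord x \<Longrightarrow> M < ord x"
    using prime_power_coprime_split[OF ord0 p] by blast
  define a where "a = x [^] (M * u)"
  define b where "b = inv (x [^] (p ^ k * w))"
  have pow_gen: "x [^] (m::nat) \<in> generate G {x}" for m
    using subgroup_int_pow_closed[OF generate_is_subgroup generate.incl, of "{x}" x "int m"] x
    by (simp add: int_pow_int)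
  have ab_gen: "a \<in> generate G {x}" "b \<in> generate G {x}"
    unfolding a_def b_def using pow_gen subgroup.m_inv_closed[OF generate_is_subgroup] x by auto
  have a1: "a = x [^] (p ^ k * w) \<otimes> x"
    using n(3) x unfolding a_def by (simp add: nat_pow_mult[symmetric])
  have a2: "a = x \<otimes> x [^] (p ^ k * w)"
    using n(3) x nat_pow_mult[of x 1 "p ^ k * w"] unfolding a_def by (simp add: add.commute)
  have "x = a \<otimes> b" using x unfolding a2 b_def by (simp add: m_assoc)
  moreover have "x = b \<otimes> a" using x unfolding a1 b_def by (simp add: m_assoc[symmetric])
  moreover have "a [^] (p ^ k) = (x [^] ord x) [^] u"
    using x unfolding a_def by (simp add: nat_pow_pow n(1) mult_ac)
  then have "a [^] (p ^ k) = \<one>" using x by simp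
  moreover have "b [^] M = inv ((x [^] ord x) [^] w)"
    using x unfolding b_def by (simp add: nat_pow_inv nat_pow_pow n(1) mult_ac)
  then have "ord b dvd M" using pow_eq_id x unfolding b_def by simp
  then have "ord b dvd ord x" "\<not> p dvd ord b" using n(1,2) dvd_trans dvd_triv_right by metis+
  moreover have "ord b < ord x" if "p dvd ord x"
  proof -
    have "ord b \<le> M" using \<open>ord b dvd M\<close> n(1) ord0 by (simp add: dvd_imp_le)
    then show ?thesis using n(4)[OF that] by simp
  qed
  ultimately show ?thesis using that ab_gen unfolding p_element_def by blast
qed

end

section \<open>Cores of Sylow subgroups\<close>

context group
begin

lemma conj_image_subgroup:
  assumes P: "subgroup P G" and g: "g \<in> carrier G"
  shows "subgroup ((\<lambda>x. g \<otimes> x \<otimes> inv g) ` P) G"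
proof (rule subgroupI)
  have Pc: "P \<subseteq> carrier G" using P subgroup.subset by blast
  show "(\<lambda>x. g \<otimes> x \<otimes> inv g) ` P \<subseteq> carrier G" using Pc g by auto
  show "(\<lambda>x. g \<otimes> x \<otimes> inv g) ` P \<noteq> {}" using subgroup.one_closed[OF P] by blast
next
  have Pc: "P \<subseteq> carrier G" using P subgroup.subset by blast
  fix a assume "a \<in> (\<lambda>x. g \<otimes> x \<otimes> inv g) ` P"
  then obtain x where x: "x \<in> P" "a = g \<otimes> x \<otimes> inv g" by auto
  have "inv a = g \<otimes> inv x \<otimes> inv g" using x Pc g by (simp add: inv_mult_group m_assoc subsetD)
  then show "inv a \<in> (\<lambda>x. g \<otimes> x \<otimes> inv g) ` P" using x P by (auto simp: subgroup.m_inv_closed)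
next
  have Pc: "P \<subseteq> carrier G" using P subgroup.subset by blast
  fix a b assume "a \<in> (\<lambda>x. g \<otimes> x \<otimes> inv g) ` P" "b \<in> (\<lambda>x. g \<otimes> x \<otimes> inv g) ` P"
  then obtain x y where xy: "x \<in> P" "a = g \<otimes> x \<otimes> inv g" "y \<in> P" "b = g \<otimes> y \<otimes> inv g" by auto
  have "a \<otimes> b = g \<otimes> (x \<otimes> y) \<otimes> inv g" using xy Pc g by (simp add: m_assoc subsetD)
  then show "a \<otimes> b \<in> (\<lambda>x. g \<otimes> x \<otimes> inv g) ` P" using xy P by (auto simp: subgroup.m_closed)
qed

lemma card_conj_image:
  assumes "P \<subseteq> carrier G" "g \<in> carrier G"
  shows "card ((\<lambda>x. g \<otimes> x \<otimes> inv g) ` P) = card P"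
proof (rule card_image, rule inj_onI)
  fix x y assume "x \<in> P" "y \<in> P" "g \<otimes> x \<otimes> inv g = g \<otimes> y \<otimes> inv g"
  then show "x = y" using assms by (metis subsetD inv_closed m_closed r_cancel l_cancel)
qed

lemma sylow_subgroup_conj:
  assumes "sylow_subgroup p P G" "g \<in> carrier G"
  shows "sylow_subgroup p ((\<lambda>x. g \<otimes> x \<otimes> inv g) ` P) G"
  using assms conj_image_subgroup card_conj_image subgroup.subset unfolding sylow_subgroup_def
  by metis

end

context finite_group
begin

lemma sylow_subgroup_exists:
  assumes p: "Factorial_Ring.prime p" shows "\<exists>P. sylow_subgroup p P G"
proof -
  let ?a = "multiplicity p (order G)"
  obtain m where "order G = p ^ ?a * m" using multiplicity_dvd[of p "order G"] unfolding dvd_def by blast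
  then obtain P where "subgroup P G" "card P = p ^ ?a"
    using sylow_thm[OF p is_group _ finite_carrier] by blast
  then show ?thesis using p unfolding sylow_subgroup_def by blast
qed

definition pcore :: "nat \<Rightarrow> 'a set" where
  "pcore p = {x \<in> carrier G. \<forall>P. sylow_subgroup p P G \<longrightarrow> x \<in> P}"

lemma pcore_subgroup: "subgroup (pcore p) G"
proof (rule subgroupI)
  show "pcore p \<subseteq> carrier G" unfolding pcore_def by auto
  have "\<one> \<in> pcore p" unfolding pcore_def sylow_subgroup_def by (auto simp: subgroup.one_closed)
  then show "pcore p \<noteq> {}" by blast
next
  fix x assume "x \<in> pcore p" then show "inv x \<in> pcore p"
    unfolding pcore_def sylow_subgroup_def by (auto simp: subgroup.m_inv_closed)
next
  fix x y assume "x \<in> pcore p" "y \<in> pcore p" then show "x \<otimes> y \<in> pcore p"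
    unfolding pcore_def sylow_subgroup_def by (auto simp: subgroup.m_closed)
qed

lemma pcore_conj_closed:
  assumes g: "g \<in> carrier G" and x: "x \<in> pcore p"
  shows "g \<otimes> x \<otimes> inv g \<in> pcore p"
proof -
  have xc: "x \<in> carrier G" using x unfolding pcore_def by auto
  have "g \<otimes> x \<otimes> inv g \<in> P" if P: "sylow_subgroup p P G" for P
  proof -
    have "sylow_subgroup p ((\<lambda>z. inv g \<otimes> z \<otimes> g) ` P) G"
      using sylow_subgroup_conj[OF P inv_closed[OF g]] g by simp
    then have "x \<in> (\<lambda>z. inv g \<otimes> z \<otimes> g) ` P" using x unfolding pcore_def by blast
    then obtain y where y: "y \<in> P" "x = inv g \<otimes> y \<otimes> g" using g by auto
    have "y \<in> carrier G" using y P subgroup.subset unfolding sylow_subgroup_def by blast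
    then have "g \<otimes> x \<otimes> inv g = y" using y g by (simp add: m_assoc)
    then show ?thesis using y by simp
  qed
  then show ?thesis unfolding pcore_def using g xc by auto
qed

lemma pcore_p_subgroup:
  assumes p: "Factorial_Ring.prime p" shows "p_subgroup p (pcore p)"
proof -
  obtain P where P: "sylow_subgroup p P G" using sylow_subgroup_exists[OF p] by blast
  then have "p_subgroup p P" unfolding sylow_subgroup_def p_subgroup_def by blast
  moreover have "pcore p \<subseteq> P" using P unfolding pcore_def by auto
  ultimately show ?thesis using p_subgroup_subgroup[OF p _ pcore_subgroup] by blast
qed

lemma pcore_commute:
  assumes p: "Factorial_Ring.prime p" and q: "Factorial_Ring.prime q" and pq: "p \<noteq> q"
    and x: "x \<in> pcore p" and y: "y \<in> pcore q"
  shows "x \<otimes> y = y \<otimes> x"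
proof -
  have xc: "x \<in> carrier G" and yc: "y \<in> carrier G" using x y unfolding pcore_def by auto
  let ?c = "x \<otimes> y \<otimes> inv x \<otimes> inv y"
  have "?c = (x \<otimes> y \<otimes> inv x) \<otimes> inv y" by simp
  then have cq: "?c \<in> pcore q"
    using pcore_conj_closed[OF xc y] subgroup.m_closed[OF pcore_subgroup]
      subgroup.m_inv_closed[OF pcore_subgroup y] by simp
  have "?c = x \<otimes> (y \<otimes> inv x \<otimes> inv y)" using xc yc by (simp add: m_assoc)
  then have cp: "?c \<in> pcore p"
    using pcore_conj_closed[OF yc subgroup.m_inv_closed[OF pcore_subgroup x]]
      subgroup.m_closed[OF pcore_subgroup x] by simp
  have "?c = \<one>"
    using p_element_q_element_eq_one[OF _ p q pq] xc yc
      p_subgroup_p_element[OF pcore_p_subgroup[OF p] cp]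
      p_subgroup_p_element[OF pcore_p_subgroup[OF q] cq] by simp
  then have "x \<otimes> y \<otimes> inv x \<otimes> inv y \<otimes> (y \<otimes> x) = y \<otimes> x" using xc yc by simp
  then show ?thesis using xc yc by (simp add: m_assoc)
qed

definition pcores :: "nat set \<Rightarrow> 'a set" where
  "pcores \<pi> = (\<Union>p\<in>\<pi>. pcore p)"

lemma pcores_carrier: "pcores \<pi> \<subseteq> carrier G"
  unfolding pcores_def pcore_def by auto

lemma pcores_conj_closed: "g \<in> carrier G \<Longrightarrow> x \<in> pcores \<pi> \<Longrightarrow> g \<otimes> x \<otimes> inv g \<in> pcores \<pi>"
  unfolding pcores_def using pcore_conj_closed by blast

end

section \<open>Nilpotent subgroups with dividing Sylow products\<close>

locale nilpotent_sylow_product = finite_group +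
  fixes H :: "'a set"
  assumes nilpotent_H: "nilpotent_subgroup H G"
    and card_sylow_product_dvd: "\<And>p P. sylow_subgroup p P G \<Longrightarrow> card (H <#> P) dvd order G"
begin

lemma subgroup_H: "subgroup H G"
  using nilpotent_H unfolding nilpotent_subgroup_def by blast

lemma H_subset_carrier: "H \<subseteq> carrier G"
  using subgroup_H subgroup.subset by blast

text \<open>The only use of the divisibility hypothesis: as |HP| |H \<inter> P| = |H| |P| divides
  |G| |H \<inter> P|, the p-part of |H| is at most |H \<inter> P|.\<close>

lemma maximal_p_subgroup_in_Int_sylow:
  assumes P: "sylow_subgroup p P G"
  shows "maximal_p_subgroup_in p (H \<inter> P) H"
proof -
  define a where "a = multiplicity p (order G)"
  have p: "Factorial_Ring.prime p" and PG: "subgroup P G" and cP: "card P = p ^ a"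
    using P unfolding sylow_subgroup_def a_def by auto
  have S: "subgroup (H \<inter> P) G" using subgroups_Inter_pair[OF subgroup_H PG] .
  have "card (H \<inter> P) dvd card P" using card_subgroup_dvd[OF S PG] by auto
  then obtain b where cS: "card (H \<inter> P) = p ^ b" using cP divides_primepow_nat[OF p] by auto
  have prod: "card (H <#> P) * p ^ b = card H * p ^ a"
    using card_set_mult_Int[OF subgroup_H PG finite_subgroup[OF subgroup_H] finite_subgroup[OF PG]]
      cS cP by simp
  define m where "m = order G div p ^ a"
  have om: "order G = p ^ a * m" unfolding m_def a_def by (simp add: multiplicity_dvd)
  have "order G \<noteq> 0" using finite_carrier by (simp add: order_gt_0_iff_finite[symmetric])
  then have pm: "\<not> p dvd m" unfolding m_def a_def
    using multiplicity_decompose p prime_gt_1_nat[OF p] by (metis not_prime_unit)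
  have "T = H \<inter> P" if T: "p_subgroup p T" "H \<inter> P \<subseteq> T" "T \<subseteq> H" for T
  proof -
    obtain c where TG: "subgroup T G" and cT: "card T = p ^ c" using T(1) unfolding p_subgroup_def by blast
    have "p ^ a * p ^ c dvd card H * p ^ a"
      using card_subgroup_dvd[OF TG subgroup_H T(3)] cT by (simp add: mult.commute)
    also have "\<dots> = card (H <#> P) * p ^ b" using prod by simp
    also have "\<dots> dvd order G * p ^ b" using card_sylow_product_dvd[OF P] by simp
    also have "\<dots> = p ^ a * (m * p ^ b)" using om by simp
    finally have "p ^ c dvd m * p ^ b" using prime_gt_0_nat[OF p] by (simp add: nat_mult_dvd_cancel1)
    moreover have "coprime (p ^ c) m" using prime_imp_coprime[OF p pm] by simp
    ultimately have "p ^ c dvd p ^ b" using coprime_dvd_mult_right_iff by blast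
    then have "card T \<le> card (H \<inter> P)" using cT cS prime_gt_0_nat[OF p] by (simp add: dvd_imp_le)
    then show "T = H \<inter> P" using card_seteq[OF finite_subgroup[OF TG] T(2)] by blast
  qed
  moreover have "p_subgroup p (H \<inter> P)" using S cS unfolding p_subgroup_def by blast
  ultimately show ?thesis unfolding maximal_p_subgroup_in_def by blast
qed

lemma p_element_in_pcore:
  assumes p: "Factorial_Ring.prime p" and x: "x \<in> H" "p_element p x"
  shows "x \<in> pcore p"
proof -
  have "x \<in> P" if P: "sylow_subgroup p P G" for P
  proof -
    have "subgroup (H \<inter> P) G"
      using subgroups_Inter_pair[OF subgroup_H] P unfolding sylow_subgroup_def by blast
    then have "subnormal_in (H \<inter> P) H" using subnormal_in_nilpotent[OF nilpotent_H] by blast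
    then show ?thesis
      using p_element_in_subnormal_maximal_p_subgroup[OF p _ maximal_p_subgroup_in_Int_sylow[OF P] x]
      by blast
  qed
  then show ?thesis using x H_subset_carrier unfolding pcore_def by blast
qed

lemma generate_singleton_subset_H: "x \<in> H \<Longrightarrow> generate G {x} \<subseteq> H"
  using generate_subgroup_incl[OF _ subgroup_H] by blast

lemma commutes_with_pcore_if_coprime_ord:
  assumes q: "Factorial_Ring.prime q"
  shows "x \<in> H \<Longrightarrow> \<not> q dvd ord x \<Longrightarrow> y \<in> pcore q \<Longrightarrow> x \<otimes> y = y \<otimes> x"
proof (induction "ord x" arbitrary: x rule: less_induct)
  case less
  have xc: "x \<in> carrier G" using less H_subset_carrier by auto
  have yc: "y \<in> carrier G" using less unfolding pcore_def by auto
  show ?case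
  proof (cases "ord x = 1")
    case True then show ?thesis using ord_eq_1[OF xc] yc by simp
  next
    case False
    obtain p where p: "Factorial_Ring.prime p" "p dvd ord x" using prime_factor_nat[OF False] by blast
    obtain a b where ab: "a \<in> generate G {x}" "b \<in> generate G {x}" "x = a \<otimes> b" "p_element p a"
        "ord b dvd ord x" "ord b < ord x"
      using prime_part_decomposition[OF xc p(1)] p(2) by blast
    have aH: "a \<in> H" and bH: "b \<in> H" using ab(1,2) generate_singleton_subset_H[OF less(2)] by auto
    have ac: "a \<in> carrier G" and bc: "b \<in> carrier G" using aH bH H_subset_carrier by auto
    have "p \<noteq> q" using p less(3) by auto
    then have ay: "a \<otimes> y = y \<otimes> a"
      using pcore_commute[OF p(1) q _ p_element_in_pcore[OF p(1) aH ab(4)] less(4)] by blast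
    have "\<not> q dvd ord b" using ab(5) less(3) dvd_trans by blast
    then have by': "b \<otimes> y = y \<otimes> b" using less(1) ab(6) bH less(4) by blast
    have "x \<otimes> y = a \<otimes> (b \<otimes> y)" using ab(3) ac bc yc by (simp add: m_assoc)
    also have "\<dots> = (a \<otimes> y) \<otimes> b" using by' ac bc yc by (simp add: m_assoc)
    also have "\<dots> = y \<otimes> x" using ay ab(3) ac bc yc by (simp add: m_assoc)
    finally show ?thesis .
  qed
qed

lemma pcore_split:
  assumes q: "Factorial_Ring.prime q" and h: "h \<in> H"
  obtains a b where "h = a \<otimes> b" "a \<in> H \<inter> pcore q" "b \<in> H" "\<And>y. y \<in> pcore q \<Longrightarrow> b \<otimes> y = y \<otimes> b"
proof -
  have hc: "h \<in> carrier G" using h H_subset_carrier by auto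
  obtain a b where ab: "a \<in> generate G {h}" "b \<in> generate G {h}" "h = a \<otimes> b" "p_element q a"
      "\<not> q dvd ord b"
    using prime_part_decomposition[OF hc q] by blast
  have aH: "a \<in> H" and bH: "b \<in> H" using ab(1,2) generate_singleton_subset_H[OF h] by auto
  show ?thesis
    using that ab(3) aH bH p_element_in_pcore[OF q aH ab(4)]
      commutes_with_pcore_if_coprime_ord[OF q bH ab(5)] by blast
qed

lemma H_subset_generate_pcores: "H \<subseteq> generate G (pcores (prime_factors (order G)))"
proof
  fix x assume "x \<in> H"
  then show "x \<in> generate G (pcores (prime_factors (order G)))"
  proof (induction "ord x" arbitrary: x rule: less_induct)
    case less
    have xc: "x \<in> carrier G" using less H_subset_carrier by auto
    show ?case
    proof (cases "ord x = 1")
      case True then show ?thesis using ord_eq_1[OF xc] generate.one by simp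
    next
      case False
      obtain p where p: "Factorial_Ring.prime p" "p dvd ord x" using prime_factor_nat[OF False] by blast
      have "p \<in> prime_factors (order G)"
        using p dvd_trans[OF p(2) ord_dvd_group_order[OF xc]] finite_carrier
        by (auto simp: in_prime_factors_iff order_gt_0_iff_finite[symmetric])
      obtain a b where ab: "a \<in> generate G {x}" "b \<in> generate G {x}" "x = a \<otimes> b" "p_element p a"
          "ord b < ord x"
        using prime_part_decomposition[OF xc p(1)] p(2) by blast
      have aH: "a \<in> H" and bH: "b \<in> H" using ab(1,2) generate_singleton_subset_H[OF less(2)] by auto
      have "a \<in> generate G (pcores (prime_factors (order G)))"
        using p_element_in_pcore[OF p(1) aH ab(4)] \<open>p \<in> prime_factors (order G)\<close>
        unfolding pcores_def by (blast intro: generate.incl)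
      moreover have "b \<in> generate G (pcores (prime_factors (order G)))" using less(1) ab(5) bH by blast
      ultimately show ?thesis using ab(3) generate.eng by metis
    qed
  qed
qed

lemma conj_by_H_closed:
  assumes q: "Factorial_Ring.prime q" and C: "subgroup C G" "H \<inter> pcore q \<subseteq> C" "C \<subseteq> pcore q"
    and g: "g \<in> H" and x: "x \<in> C"
  shows "g \<otimes> x \<otimes> inv g \<in> C"
proof -
  obtain a b where ab: "g = a \<otimes> b" "a \<in> H \<inter> pcore q" "b \<in> H" "\<And>y. y \<in> pcore q \<Longrightarrow> b \<otimes> y = y \<otimes> b"
    using pcore_split[OF q g] by blast
  have ac: "a \<in> carrier G" and bc: "b \<in> carrier G" and xc: "x \<in> carrier G"
    using ab(2,3) x C(3) H_subset_carrier unfolding pcore_def by auto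
  have "b \<otimes> x = x \<otimes> b" using ab(4) x C(3) by blast
  then have bx: "b \<otimes> x \<otimes> inv b = x" using bc xc by (simp add: m_assoc)
  have "g \<otimes> x \<otimes> inv g = a \<otimes> (b \<otimes> x \<otimes> inv b) \<otimes> inv a"
    using ab(1) ac bc xc by (simp add: m_assoc inv_mult_group)
  also have "\<dots> = a \<otimes> x \<otimes> inv a" using bx by simp
  finally show ?thesis using ab(2) x C by (auto intro!: subgroup.m_closed subgroup.m_inv_closed)
qed

lemma conj_H_in_product:
  assumes q: "Factorial_Ring.prime q" and C: "subgroup C G" "H \<inter> pcore q \<subseteq> C"
    and D: "subgroup D G" "D \<subseteq> pcore q" and nor: "normal C (G\<lparr>carrier := D\<rparr>)"
    and g: "g \<in> D" and x: "x \<in> H"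
  obtains c h where "g \<otimes> x \<otimes> inv g = c \<otimes> h" "c \<in> C" "h \<in> H"
proof -
  obtain a b where ab: "x = a \<otimes> b" "a \<in> H \<inter> pcore q" "b \<in> H" "\<And>y. y \<in> pcore q \<Longrightarrow> b \<otimes> y = y \<otimes> b"
    using pcore_split[OF q x] by blast
  have gc: "g \<in> carrier G" and ac: "a \<in> carrier G" and bc: "b \<in> carrier G"
    using g ab(2,3) H_subset_carrier subgroup.subset[OF D(1)] by auto
  have "b \<otimes> g = g \<otimes> b" using ab(4) g D(2) by blast
  then have "g \<otimes> b \<otimes> inv g = b \<otimes> g \<otimes> inv g" by simp
  then have gb: "g \<otimes> b \<otimes> inv g = b" using gc bc by (simp add: m_assoc)
  have "g \<otimes> x \<otimes> inv g = (g \<otimes> a \<otimes> inv g) \<otimes> (g \<otimes> b \<otimes> inv g)"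
    using ab(1) gc ac bc by (simp add: m_assoc)
  then have "g \<otimes> x \<otimes> inv g = (g \<otimes> a \<otimes> inv g) \<otimes> b" unfolding gb .
  moreover have "g \<otimes> a \<otimes> inv g \<in> C" using normal_restrictD[OF nor D(1) g] ab(2) C(2) by blast
  ultimately show ?thesis using that ab(3) by blast
qed

text \<open>Conjugation by u \<in> U is handled via u x u\<inverse> = u (x u x\<inverse>)\<inverse> x, which only needs
  U to be closed under conjugation.\<close>

lemma normal_generate_adjoin:
  assumes q: "Factorial_Ring.prime q"
    and U: "U \<subseteq> carrier G" "\<And>g u. g \<in> carrier G \<Longrightarrow> u \<in> U \<Longrightarrow> g \<otimes> u \<otimes> inv g \<in> U"
    and C: "subgroup C G" "H \<inter> pcore q \<subseteq> C"
    and D: "subgroup D G" "D \<subseteq> pcore q" and nor: "normal C (G\<lparr>carrier := D\<rparr>)"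
  shows "normal (generate G (H \<union> U \<union> C)) (G\<lparr>carrier := generate G (H \<union> U \<union> D)\<rparr>)"
proof (rule normal_generate_restrictI)
  have CD: "C \<subseteq> D" using normal_restrict_subset[OF nor] .
  have Dc: "D \<subseteq> carrier G" using D(1) subgroup.subset by blast
  show "H \<union> U \<union> C \<subseteq> H \<union> U \<union> D" "H \<union> U \<union> D \<subseteq> carrier G"
    using CD Dc H_subset_carrier U(1) by auto
  then show "finite (generate G (H \<union> U \<union> C))" using finite_subset_carrier generate_incl by blast
  let ?X = "H \<union> U \<union> C"
  fix g x assume g: "g \<in> H \<union> U \<union> D" and x: "x \<in> ?X"
  have gc: "g \<in> carrier G" and xc: "x \<in> carrier G" using g x CD Dc H_subset_carrier U(1) by auto
  have incl: "z \<in> ?X \<Longrightarrow> z \<in> generate G ?X" for z by (rule generate.incl)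
  consider "x \<in> U" | "g \<in> U" | "g \<in> H" "x \<in> H" | "g \<in> H" "x \<in> C" | "g \<in> D" "x \<in> H"
    | "g \<in> D" "x \<in> C" using g x by blast
  then show "g \<otimes> x \<otimes> inv g \<in> generate G ?X"
  proof cases
    case 1 then show ?thesis using U(2)[OF gc] incl by blast
  next
    case 2
    have "x \<otimes> g \<otimes> inv x \<in> U" using U(2)[OF xc 2] .
    then have "inv (x \<otimes> g \<otimes> inv x) \<in> generate G ?X" by (blast intro: generate.inv)
    then have "g \<otimes> inv (x \<otimes> g \<otimes> inv x) \<otimes> x \<in> generate G ?X"
      using 2 x by (blast intro: generate.eng generate.incl)
    moreover have "g \<otimes> inv (x \<otimes> g \<otimes> inv x) \<otimes> x = g \<otimes> x \<otimes> inv g"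
      using gc xc by (simp add: inv_mult_group m_assoc)
    ultimately show ?thesis by simp
  next
    case 3 then show ?thesis using subgroup_H incl by (blast intro: subgroup.m_closed subgroup.m_inv_closed)
  next
    case 4 then show ?thesis using conj_by_H_closed[OF q C(1,2)] CD D(2) incl by blast
  next
    case 5
    then obtain c h where "g \<otimes> x \<otimes> inv g = c \<otimes> h" "c \<in> C" "h \<in> H"
      using conj_H_in_product[OF q C D nor] by blast
    then show ?thesis by (simp add: generate.eng generate.incl)
  next
    case 6 then show ?thesis using normal_restrictD[OF nor D(1)] incl by blast
  qed
qed

lemma subnormal_in_adjoin_pcore:
  assumes q: "Factorial_Ring.prime q"
    and U: "U \<subseteq> carrier G" "\<And>g u. g \<in> carrier G \<Longrightarrow> u \<in> U \<Longrightarrow> g \<otimes> u \<otimes> inv g \<in> U"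
  shows "subnormal_in (generate G (H \<union> U)) (generate G (H \<union> U \<union> pcore q))"
proof -
  have Qc: "pcore q \<subseteq> carrier G" using pcore_subgroup subgroup.subset by blast
  have "subnormal_in (generate G (H \<union> U \<union> C)) (generate G (H \<union> U \<union> D))"
    if "subnormal_in C D" "H \<inter> pcore q \<subseteq> C" "D \<subseteq> pcore q" for C D
    using that
  proof (induction rule: subnormal_in.induct)
    case (refl C)
    then show ?case using H_subset_carrier U(1) Qc by (intro subnormal_in.refl generate_is_subgroup) auto
  next
    case (normal_step A B D)
    have "A \<subseteq> B" "B \<subseteq> D"
      using subnormal_in_subset[OF normal_step.hyps(1)] normal_restrict_subset[OF normal_step.hyps(3)] .
    then have IH: "subnormal_in (generate G (H \<union> U \<union> A)) (generate G (H \<union> U \<union> B))"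
      using normal_step.IH normal_step.prems by blast
    have "normal (generate G (H \<union> U \<union> B)) (G\<lparr>carrier := generate G (H \<union> U \<union> D)\<rparr>)"
      using normal_generate_adjoin[OF q U subnormal_in_subgroups(2)[OF normal_step.hyps(1)] _
          normal_step.hyps(2)] normal_step.hyps(3) normal_step.prems \<open>A \<subseteq> B\<close> by blast
    then show ?case
      using subnormal_in.normal_step[OF IH] normal_step.prems(2) H_subset_carrier U(1) Qc
      by (metis generate_is_subgroup le_sup_iff order_trans)
  qed
  moreover have "subnormal_in (H \<inter> pcore q) (pcore q)"
    using subnormal_in_p_group[OF q pcore_p_subgroup[OF q]] subgroups_Inter_pair[OF subgroup_H pcore_subgroup]
    by blast
  moreover have "H \<union> U \<union> (H \<inter> pcore q) = H \<union> U" by blast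
  ultimately show ?thesis by fastforce
qed

lemma subnormal_in_generate_pcores:
  assumes "finite \<pi>" "\<pi> \<subseteq> {p. Factorial_Ring.prime p}"
  shows "subnormal_in H (generate G (H \<union> pcores \<pi>))"
  using assms
proof (induction \<pi> rule: finite_induct)
  case empty
  have "generate G H = H"
    using generate_subgroup_incl[OF order.refl subgroup_H] generate.incl[of _ H G] by blast
  then show ?case using subnormal_in.refl[OF subgroup_H] by (simp add: pcores_def)
next
  case (insert q \<pi>)
  have q: "Factorial_Ring.prime q" using insert.prems by blast
  have "H \<union> pcores \<pi> \<union> pcore q = H \<union> pcores (insert q \<pi>)" by (auto simp: pcores_def)
  then have "subnormal_in (generate G (H \<union> pcores \<pi>)) (generate G (H \<union> pcores (insert q \<pi>)))"
    using subnormal_in_adjoin_pcore[OF q pcores_carrier[of \<pi>] pcores_conj_closed] by simp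
  moreover have "subnormal_in H (generate G (H \<union> pcores \<pi>))" using insert.IH insert.prems by blast
  ultimately show ?case using subnormal_in_trans by blast
qed

lemma subnormal_in_carrier: "subnormal_in H (carrier G)"
proof -
  define V where "V = pcores (prime_factors (order G))"
  have "H \<union> V \<subseteq> generate G V"
    using H_subset_generate_pcores generate.incl[of _ V G] unfolding V_def by blast
  then have "generate G (H \<union> V) = generate G V"
    using generate_subgroup_incl[OF _ generate_is_subgroup] mono_generate pcores_carrier
    unfolding V_def by (metis Un_upper2 subset_antisym)
  then have "subnormal_in H (generate G V)"
    using subnormal_in_generate_pcores[of "prime_factors (order G)"] unfolding V_def
    by (auto simp: in_prime_factors_iff)
  moreover have nor: "normal (generate G V) G"
    using normal_generateI[OF pcores_carrier pcores_conj_closed] unfolding V_def by blast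
  then have "normal (generate G V) (G\<lparr>carrier := carrier G\<rparr>)" by simp
  then have "subnormal_in (generate G V) (carrier G)"
    using subnormal_in.normal_step[OF subnormal_in.refl[OF normal_imp_subgroup[OF nor]] subgroup_self]
    by blast
  ultimately show ?thesis using subnormal_in_trans by blast
qed

end

theorem lemma3p6:
  fixes G (structure) and H :: "'a set"
  assumes "group G" and "finite (carrier G)"
    and "nilpotent_subgroup H G"
    and "\<And>p P. sylow_subgroup p P G \<Longrightarrow> card (H <#> P) dvd order G"
  shows "subnormal H G"
proof -
  interpret nilpotent_sylow_product G H
    using assms by (simp add: nilpotent_sylow_product_def nilpotent_sylow_product_axioms_def
        finite_group_def finite_group_axioms_def)
  show ?thesis using subnormal_if_subnormal_in_carrier[OF subnormal_in_carrier] .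
qed

end
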